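(* Let $A=KQ/I$ be a finite-dimensional gentle algebra and let $C=c_1\cdots c_m$ be a string for $A$ with an intersecting auto-reaching given by substrings $C[i,j]$ and $C[i',j']$. Then the two substrings are oriented in the same direction in $C$: the word $c_i\cdots c_{j-1}$ equals the word $c_{i'}\cdots c_{j'-1}$, and $C[i,j]$ is not the inverse walk of $C[i',j']$.
   Context: Letters are arrows $\alpha\in Q_1$ (direct, traversed from $s(\alpha)$ to $t(\alpha)$) and formal inverses $\alpha^{-1}$ (inverse, traversed from $t(\alpha)$ to $s(\alpha)$). A string is a reduced walk (no letter followed by its own inverse) in $Q$ avoiding the relations of $I$ and their inverses; it is identified with its inverse walk. For $C=c_1\cdots c_m$ with vertex positions $v_1,\dots,v_{m+1}$ and $1\le i\le j\le m+1$, $C[i,j]=c_i\cdots c_{j-1}$ (the trivial string at $v_i$ if $i=j$). $C[i,j]$ is on top of $C$ if ($i=1$ or $c_{i-1}$ is inverse) and ($j=m+1$ or $c_j$ is direct); it is at the bottom of $C$ if ($i=1$ or $c_{i-1}$ is direct) and ($j=m+1$ or $c_j$ is inverse). An auto-reaching of $C$ is given by a substring $C[i,j]$ on top of $C$ and a substring $C[i',j']$ at the bottom of $C$ which are equal as strings (equal or mutually inverse walks) and satisfy the swinging arms condition: if $i'=1$ then $i\neq1$, and if $j'=m+1$ then $j\ne m+1$. It is intersecting if $i<i'\le j<j'$ or $i'<i\le j'<j$. *)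

theory Defs
  imports Main
begin

text \<open>Paths are written left to right: a path alpha beta requires t alpha = s beta.
  A gentle algebra KQ/I has I generated by a set R of length-two paths (a,b).\<close>

datatype 'a letter = Dir 'a | Inv 'a

fun arr :: "'a letter \<Rightarrow> 'a" where
  "arr (Dir a) = a" | "arr (Inv a) = a"

fun is_dir :: "'a letter \<Rightarrow> bool" where
  "is_dir (Dir a) = True" | "is_dir (Inv a) = False"

fun is_inv :: "'a letter \<Rightarrow> bool" where
  "is_inv (Dir a) = False" | "is_inv (Inv a) = True"

fun linv :: "'a letter \<Rightarrow> 'a letter" where
  "linv (Dir a) = Inv a" | "linv (Inv a) = Dir a"

fun lsrc :: "('a \<Rightarrow> 'v) \<Rightarrow> ('a \<Rightarrow> 'v) \<Rightarrow> 'a letter \<Rightarrow> 'v" where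
  "lsrc s t (Dir a) = s a" | "lsrc s t (Inv a) = t a"

fun ltgt :: "('a \<Rightarrow> 'v) \<Rightarrow> ('a \<Rightarrow> 'v) \<Rightarrow> 'a letter \<Rightarrow> 'v" where
  "ltgt s t (Dir a) = t a" | "ltgt s t (Inv a) = s a"

text \<open>Nontrivial paths of Q avoiding the relations (i.e. nonzero paths in KQ/I).\<close>
definition nonzero_path :: "'a set \<Rightarrow> ('a \<Rightarrow> 'v) \<Rightarrow> ('a \<Rightarrow> 'v) \<Rightarrow> ('a \<times> 'a) set \<Rightarrow> 'a list \<Rightarrow> bool" where
  "nonzero_path Q1 s t R p \<longleftrightarrow> p \<noteq> [] \<and> set p \<subseteq> Q1 \<and>
     (\<forall>k. Suc k < length p \<longrightarrow> t (p ! k) = s (p ! Suc k) \<and> (p ! k, p ! Suc k) \<notin> R)"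

definition gentle :: "'v set \<Rightarrow> 'a set \<Rightarrow> ('a \<Rightarrow> 'v) \<Rightarrow> ('a \<Rightarrow> 'v) \<Rightarrow> ('a \<times> 'a) set \<Rightarrow> bool" where
  "gentle Q0 Q1 s t R \<longleftrightarrow>
     finite Q0 \<and> finite Q1 \<and> (\<forall>a\<in>Q1. s a \<in> Q0 \<and> t a \<in> Q0) \<and>
     R \<subseteq> {(a, b). a \<in> Q1 \<and> b \<in> Q1 \<and> t a = s b} \<and>
     (\<forall>v\<in>Q0. card {a\<in>Q1. s a = v} \<le> 2 \<and> card {a\<in>Q1. t a = v} \<le> 2) \<and>
     (\<forall>a\<in>Q1. card {b\<in>Q1. t a = s b \<and> (a, b) \<in> R} \<le> 1 \<and>
              card {b\<in>Q1. t a = s b \<and> (a, b) \<notin> R} \<le> 1) \<and>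
     (\<forall>b\<in>Q1. card {a\<in>Q1. t a = s b \<and> (a, b) \<in> R} \<le> 1 \<and>
              card {a\<in>Q1. t a = s b \<and> (a, b) \<notin> R} \<le> 1) \<and>
     finite {p. nonzero_path Q1 s t R p}"

type_synonym ('v, 'a) walk = "'v \<times> 'a letter list"

definition is_string :: "'v set \<Rightarrow> 'a set \<Rightarrow> ('a \<Rightarrow> 'v) \<Rightarrow> ('a \<Rightarrow> 'v) \<Rightarrow> ('a \<times> 'a) set \<Rightarrow> ('v, 'a) walk \<Rightarrow> bool" where
  "is_string Q0 Q1 s t R C \<longleftrightarrow> (case C of (v, cs) \<Rightarrow>
     v \<in> Q0 \<and> (\<forall>c\<in>set cs. arr c \<in> Q1) \<and>
     (cs \<noteq> [] \<longrightarrow> lsrc s t (hd cs) = v) \<and>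
     (\<forall>k. Suc k < length cs \<longrightarrow>
        ltgt s t (cs ! k) = lsrc s t (cs ! Suc k) \<and>
        cs ! Suc k \<noteq> linv (cs ! k) \<and>
        (\<forall>a b. (a, b) \<in> R \<longrightarrow>
           \<not> (cs ! k = Dir a \<and> cs ! Suc k = Dir b) \<and>
           \<not> (cs ! k = Inv b \<and> cs ! Suc k = Inv a))))"

text \<open>Vertex positions v_1, ..., v_(m+1) (1-based).\<close>
definition vpos :: "('a \<Rightarrow> 'v) \<Rightarrow> ('a \<Rightarrow> 'v) \<Rightarrow> ('v, 'a) walk \<Rightarrow> nat \<Rightarrow> 'v" where
  "vpos s t C k = (if k \<le> 1 then fst C else ltgt s t (snd C ! (k - 2)))"

text \<open>C[i,j] = c_i ... c_(j-1), starting at v_i (1-based).\<close>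
definition substr :: "('a \<Rightarrow> 'v) \<Rightarrow> ('a \<Rightarrow> 'v) \<Rightarrow> ('v, 'a) walk \<Rightarrow> nat \<Rightarrow> nat \<Rightarrow> ('v, 'a) walk" where
  "substr s t C i j = (vpos s t C i, take (j - i) (drop (i - 1) (snd C)))"

definition winv :: "('a \<Rightarrow> 'v) \<Rightarrow> ('a \<Rightarrow> 'v) \<Rightarrow> ('v, 'a) walk \<Rightarrow> ('v, 'a) walk" where
  "winv s t C = (vpos s t C (length (snd C) + 1), rev (map linv (snd C)))"

definition string_eq :: "('a \<Rightarrow> 'v) \<Rightarrow> ('a \<Rightarrow> 'v) \<Rightarrow> ('v, 'a) walk \<Rightarrow> ('v, 'a) walk \<Rightarrow> bool" where
  "string_eq s t D E \<longleftrightarrow> D = E \<or> D = winv s t E"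

definition on_top :: "('v, 'a) walk \<Rightarrow> nat \<Rightarrow> nat \<Rightarrow> bool" where
  "on_top C i j \<longleftrightarrow> 1 \<le> i \<and> i \<le> j \<and> j \<le> length (snd C) + 1 \<and>
     (i = 1 \<or> is_inv (snd C ! (i - 2))) \<and>
     (j = length (snd C) + 1 \<or> is_dir (snd C ! (j - 1)))"

definition at_bottom :: "('v, 'a) walk \<Rightarrow> nat \<Rightarrow> nat \<Rightarrow> bool" where
  "at_bottom C i j \<longleftrightarrow> 1 \<le> i \<and> i \<le> j \<and> j \<le> length (snd C) + 1 \<and>
     (i = 1 \<or> is_dir (snd C ! (i - 2))) \<and>
     (j = length (snd C) + 1 \<or> is_inv (snd C ! (j - 1)))"

definition auto_reaching :: "('a \<Rightarrow> 'v) \<Rightarrow> ('a \<Rightarrow> 'v) \<Rightarrow> ('v, 'a) walk \<Rightarrow> nat \<Rightarrow> nat \<Rightarrow> nat \<Rightarrow> nat \<Rightarrow> bool" where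
  "auto_reaching s t C i j i' j' \<longleftrightarrow>
     on_top C i j \<and> at_bottom C i' j' \<and>
     string_eq s t (substr s t C i j) (substr s t C i' j') \<and>
     (i' = 1 \<longrightarrow> i \<noteq> 1) \<and>
     (j' = length (snd C) + 1 \<longrightarrow> j \<noteq> length (snd C) + 1)"

definition intersecting :: "nat \<Rightarrow> nat \<Rightarrow> nat \<Rightarrow> nat \<Rightarrow> bool" where
  "intersecting i j i' j' \<longleftrightarrow> (i < i' \<and> i' \<le> j \<and> j < j') \<or> (i' < i \<and> i \<le> j' \<and> j' < j)"

end

theory Submission
  imports Defs
begin

text \<open>If \<open>C[i,j]\<close> were the inverse walk of the overlapping (or adjacent) \<open>C[i',j']\<close>,
  the segment of \<open>C\<close> spanned by both would be its own inverse. Then its middle letter would be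
  its own inverse, or its two middle letters would be mutually inverse; the first is impossible
  and the second contradicts reducedness.\<close>

lemma linv_linv [simp]: "linv (linv c) = c"
  by (cases c) auto

lemma linv_neq_self: "linv c \<noteq> c"
  by (cases c) auto

definition reduced :: "'a letter list \<Rightarrow> bool" where
  "reduced w \<longleftrightarrow> (\<forall>k. Suc k < length w \<longrightarrow> w ! Suc k \<noteq> linv (w ! k))"

lemma is_string_reduced: "is_string Q0 Q1 s t R (v, cs) \<Longrightarrow> reduced cs"
  by (simp add: is_string_def reduced_def)

lemma reduced_take_drop:
  assumes "reduced w"
  shows "reduced (take n (drop x w))"
  unfolding reduced_def
proof (intro allI impI)
  fix k assume "Suc k < length (take n (drop x w))"
  then have "Suc (x + k) < length w" and "Suc k < n" by auto
  then show "take n (drop x w) ! Suc k \<noteq> linv (take n (drop x w) ! k)"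
    using assms by (simp add: reduced_def)
qed

lemma inverse_word_eq_iff: "u = rev (map linv w) \<longleftrightarrow> w = rev (map linv u)"
  by (auto simp: rev_map comp_def)

lemma reduced_neq_inverse:
  assumes "reduced w" and "w \<noteq> []"
  shows "w \<noteq> rev (map linv w)"
proof
  assume self_inv: "w = rev (map linv w)"
  define l where "l = length w"
  define m where "m = (l - 1) div 2"
  have l_pos: "0 < l" using assms(2) by (simp add: l_def)
  have mirror: "w ! k = linv (w ! (l - 1 - k))" if "k < l" for k
    using that arg_cong[OF self_inv, of "\<lambda>u. u ! k"] by (simp add: rev_nth l_def)
  have "l = 2 * m + 1 \<or> l = 2 * m + 2" using l_pos unfolding m_def by linarith
  then show False
  proof
    assume "l = 2 * m + 1"
    then have "w ! m = linv (w ! m)" using mirror[of m] by simp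
    then show False using linv_neq_self by metis
  next
    assume "l = 2 * m + 2"
    then have "w ! Suc m = linv (w ! m)" using mirror[of m] by simp
    then show False using assms(1) \<open>l = 2 * m + 2\<close> by (simp add: reduced_def l_def)
  qed
qed

lemma reduced_overlapping_factors_not_inverse:
  assumes red: "reduced w" and "0 < n" and "x \<le> y" "y \<le> x + n" "y + n \<le> length w"
  shows "take n (drop x w) \<noteq> rev (map linv (take n (drop y w)))"
proof
  assume inv: "take n (drop x w) = rev (map linv (take n (drop y w)))"
  have pair: "w ! (x + k) = linv (w ! (y + n - 1 - k))" if "k < n" for k
    using that assms arg_cong[OF inv, of "\<lambda>u. u ! k"] by (simp add: rev_nth)
  define l where "l = y + n - x"
  define u where "u = take l (drop x w)"
  have len_u: "length u = l" using assms by (simp add: u_def l_def)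
  have "u = rev (map linv u)"
  proof (rule nth_equalityI)
    fix p assume "p < length u"
    then have p: "p < l" by (simp add: len_u)
    have "w ! (x + p) = linv (w ! (x + (l - 1 - p)))"
    proof (cases "p < n")
      case True
      then show ?thesis using pair[of p] assms by (simp add: l_def)
    next
      case False
      then have "l - 1 - p < n" using p assms by (simp add: l_def)
      then show ?thesis using pair[of "l - 1 - p"] p assms by (simp add: l_def)
    qed
    then show "u ! p = rev (map linv u) ! p" using p len_u by (simp add: u_def rev_nth)
  qed simp
  moreover have "reduced u" using red by (simp add: u_def reduced_take_drop)
  moreover have "u \<noteq> []" using assms len_u by (auto simp: l_def)
  ultimately show False using reduced_neq_inverse by blast
qed

lemma snd_substr: "snd (substr s t C i j) = take (j - i) (drop (i - 1) (snd C))"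
  by (simp add: substr_def)

lemma snd_winv: "snd (winv s t D) = rev (map linv (snd D))"
  by (simp add: winv_def)

lemma reduced_overlapping_substr_not_inverse:
  assumes "reduced (snd C)" and "1 \<le> i" "i < i'" "i' \<le> j" "j' \<le> length (snd C) + 1"
    and "j' - i' = j - i"
  shows "snd (substr s t C i j) \<noteq> rev (map linv (snd (substr s t C i' j')))"
  unfolding snd_substr \<open>j' - i' = j - i\<close> using assms
  by (intro reduced_overlapping_factors_not_inverse) auto

theorem mainTheorem7:
  fixes Q0 :: "'v set" and Q1 :: "'a set" and s t :: "'a \<Rightarrow> 'v"
    and R :: "('a \<times> 'a) set" and C :: "('v, 'a) walk" and i j i' j' :: nat
  assumes "gentle Q0 Q1 s t R"
    and "is_string Q0 Q1 s t R C"
    and "auto_reaching s t C i j i' j'"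
    and "intersecting i j i' j'"
  shows "snd (substr s t C i j) = snd (substr s t C i' j') \<and>
         substr s t C i j \<noteq> winv s t (substr s t C i' j')"
proof -
  obtain v cs where C: "C = (v, cs)" by (cases C)
  have red: "reduced cs" using assms(2) unfolding C by (rule is_string_reduced)
  have bounds: "1 \<le> i" "i \<le> j" "j \<le> length cs + 1" "1 \<le> i'" "i' \<le> j'" "j' \<le> length cs + 1"
    and eq: "string_eq s t (substr s t C i j) (substr s t C i' j')"
    using assms(3) by (auto simp: auto_reaching_def on_top_def at_bottom_def C)
  have "length (snd (substr s t C i j)) = length (snd (substr s t C i' j'))"
    using eq unfolding string_eq_def by (auto simp: snd_winv)
  then have len: "j' - i' = j - i" using bounds by (simp add: snd_substr C)
  have "snd (substr s t C i j) \<noteq> rev (map linv (snd (substr s t C i' j')))"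
    using assms(4) unfolding intersecting_def
  proof (elim disjE conjE)
    assume "i < i'" "i' \<le> j" "j < j'"
    then show ?thesis
      using red bounds len by (intro reduced_overlapping_substr_not_inverse) (auto simp: C)
  next
    assume "i' < i" "i \<le> j'" "j' < j"
    then have "snd (substr s t C i' j') \<noteq> rev (map linv (snd (substr s t C i j)))"
      using red bounds len by (intro reduced_overlapping_substr_not_inverse) (auto simp: C)
    then show ?thesis by (metis inverse_word_eq_iff)
  qed
  then show ?thesis
    using eq by (metis string_eq_def snd_winv)
qed

end
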